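(* Let $\alpha\in(0,1)$, let $f:\mathbb{R}\to\mathbb{R}$ be a function and $x_{0}\in\mathbb{R}$. Then the fractional system \[ {}^{c}_{0}D_{t}^{\alpha}x(t)=f(x(t)),\quad t\geq 0,\qquad x(0)=x_{0}, \] has no nonconstant periodic solution $x:[0,\infty)\to\mathbb{R}$.
   Context: For $\alpha\in(0,1)$, the Caputo fractional derivative of order $\alpha$ is $({}^{c}_{0}D_{t}^{\alpha}x)(t)=\frac{1}{\Gamma(1-\alpha)}\int_{0}^{t}(t-\tau)^{-\alpha}x'(\tau)\,d\tau$, i.e. the Riemann–Liouville fractional integral of order $1-\alpha$ applied to $x'$ (where $x'$ is locally integrable). A solution is a function $x$ on $[0,\infty)$ for which this derivative is defined and the equation and initial condition hold; it is periodic if $x(t+T)=x(t)$ for all $t\ge 0$ for some $T>0$. *)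

theory Defs
  imports "HOL-Analysis.Analysis"
begin

text \<open>x is absolutely continuous on [0,oo) with locally integrable derivative dx,
  i.e. x t = x 0 + integral of dx over [0,t] for every t >= 0.\<close>
definition has_loc_int_derivative :: "(real \<Rightarrow> real) \<Rightarrow> (real \<Rightarrow> real) \<Rightarrow> bool" where
  "has_loc_int_derivative x dx \<longleftrightarrow>
     (\<forall>t\<ge>0. set_integrable lborel {0..t} dx \<and>
             x t = x 0 + (LINT \<tau>:{0..t}|lborel. dx \<tau>))"

definition caputo :: "real \<Rightarrow> (real \<Rightarrow> real) \<Rightarrow> real \<Rightarrow> real" where
  "caputo \<alpha> dx t = (1 / Gamma (1 - \<alpha>)) * (LINT \<tau>:{0..t}|lborel. (t - \<tau>) powr (- \<alpha>) * dx \<tau>)"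

definition caputo_defined :: "real \<Rightarrow> (real \<Rightarrow> real) \<Rightarrow> real \<Rightarrow> bool" where
  "caputo_defined \<alpha> dx t \<longleftrightarrow> set_integrable lborel {0..t} (\<lambda>\<tau>. (t - \<tau>) powr (- \<alpha>) * dx \<tau>)"

definition is_solution :: "real \<Rightarrow> (real \<Rightarrow> real) \<Rightarrow> real \<Rightarrow> (real \<Rightarrow> real) \<Rightarrow> bool" where
  "is_solution \<alpha> f x0 x \<longleftrightarrow>
     x 0 = x0 \<and>
     (\<exists>dx. has_loc_int_derivative x dx \<and>
           (\<forall>t\<ge>0. caputo_defined \<alpha> dx t \<and> caputo \<alpha> dx t = f (x t)))"

definition periodic_on_nonneg :: "(real \<Rightarrow> real) \<Rightarrow> bool" where
  "periodic_on_nonneg x \<longleftrightarrow> (\<exists>T>0. \<forall>t\<ge>0. x (t + T) = x t)"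

definition nonconstant_on_nonneg :: "(real \<Rightarrow> real) \<Rightarrow> bool" where
  "nonconstant_on_nonneg x \<longleftrightarrow> (\<exists>s\<ge>0. \<exists>t\<ge>0. x s \<noteq> x t)"

end

theory Submission
  imports Defs
begin

text \<open>Let h be the derivative of a T-periodic solution x and let G t be the integral of
  (t - u) powr (- \<alpha>) * h u over [0, t]; then G t = Gamma (1 - \<alpha>) * f (x t) is T-periodic as well.
  Integrating G against the kernel (t - u) powr (\<alpha> - 1) over [0, t] undoes the Caputo derivative and
  gives Beta \<alpha> (1 - \<alpha>) * (x t - x 0). Splitting this integral at T and using both periodicities shows
  that the integral of (v - u) powr (\<alpha> - 1) * G u over [0, T] vanishes for every v > T. Expanding
  (v - u) powr (\<alpha> - 1) binomially in powers of 1 / v, all moments of G on [0, T] vanish, so by the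
  Weierstrass approximation theorem G is orthogonal to every continuous function on [0, T].
  Approximating the kernel (t - u) powr (\<alpha> - 1) by continuous cut-offs then yields x t = x 0 on
  [0, T], and by periodicity x is constant.\<close>

lemma gbinomial_ne_0:
  fixes a :: "'a::{field_char_0}"
  assumes "a \<notin> \<nat>"
  shows "a gchoose k \<noteq> 0"
proof -
  have "(\<Prod>i = 0..<k. a - of_nat i) \<noteq> 0"
    using assms by auto
  then show ?thesis
    using gbinomial_mult_fact[of k a] by auto
qed

lemma abs_gbinomial_le_1:
  fixes a :: real
  assumes "-1 \<le> a" "a \<le> 0"
  shows "\<bar>a gchoose k\<bar> \<le> 1"
proof (induction k)
  case (Suc k)
  have "a gchoose Suc k = (a - of_nat k) / of_nat (Suc k) * (a gchoose k)"
    using gbinomial_mult_1[of a k] by (simp add: field_simps del: of_nat_Suc)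
  then have "\<bar>a gchoose Suc k\<bar> = \<bar>(a - of_nat k) / of_nat (Suc k)\<bar> * \<bar>a gchoose k\<bar>"
    by (simp add: abs_mult)
  also have "\<dots> \<le> 1 * 1"
    using assms Suc by (intro mult_mono) (simp_all add: field_simps)
  finally show ?case
    by simp
qed simp

lemma powser_eq_0_if_vanishes_at_right:
  fixes a :: "nat \<Rightarrow> real"
  assumes "0 < s"
    and summable: "\<And>x. \<bar>x\<bar> < s \<Longrightarrow> summable (\<lambda>k. a k * x ^ k)"
    and vanishes: "\<And>x. 0 < x \<Longrightarrow> x < s \<Longrightarrow> (\<lambda>k. a k * x ^ k) sums 0"
  shows "a n = 0"
proof (induction n rule: less_induct)
  case (less n)
  define g where "g x = (\<Sum>k. a k * x ^ k) / x ^ n" for x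
  have shifted: "(\<lambda>k. a (k + n) * x ^ k) sums g x" if "x \<noteq> 0" "\<bar>x\<bar> < s" for x
  proof -
    have "(\<lambda>k. a (k + n) * x ^ (k + n)) sums (\<Sum>k. a k * x ^ k)"
      using summable_sums[OF summable[OF that(2)]] less.IH
      by (subst sums_zero_iff_shift[where f = "\<lambda>k. a k * x ^ k"]) simp_all
    from sums_divide[OF this, of "x ^ n"] show ?thesis
      using that by (simp add: g_def power_add)
  qed
  have "(g \<longlongrightarrow> a n) (at 0)"
    using powser_limit_0_strong[OF \<open>0 < s\<close>, of "\<lambda>k. a (k + n)" g] shifted by simp
  then have "(g \<longlongrightarrow> a n) (at_right 0)"
    by (simp add: filterlim_at_split)
  moreover have "eventually (\<lambda>x. g x = 0) (at_right 0)"
    unfolding eventually_at_right_field using \<open>0 < s\<close> vanishes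
    by (auto simp: g_def sums_iff intro!: exI[of _ s])
  then have "(g \<longlongrightarrow> 0) (at_right 0)"
    by (rule tendsto_eventually)
  ultimately show ?case
    by (rule tendsto_unique[rotated]) simp
qed

lemma set_integrable_continuous_mult:
  fixes G \<phi> :: "real \<Rightarrow> real"
  assumes G: "set_integrable lborel {a..b} G" and \<phi>: "continuous_on {a..b} \<phi>"
  shows "set_integrable lborel {a..b} (\<lambda>u. \<phi> u * G u)"
proof -
  obtain B where B: "\<And>u. u \<in> {a..b} \<Longrightarrow> \<bar>\<phi> u\<bar> \<le> B"
    using compact_imp_bounded[OF compact_continuous_image[OF \<phi> compact_Icc]]
    by (force simp: bounded_iff)
  have "(\<lambda>u. indicator {a..b} u *\<^sub>R (\<phi> u * G u))
      = (\<lambda>u. (indicator {a..b} u *\<^sub>R \<phi> u) * (indicator {a..b} u *\<^sub>R G u))"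
    by (auto simp: indicator_def)
  also have "\<dots> \<in> borel_measurable lborel"
    using borel_measurable_continuous_on_indicator[OF _ \<phi>]
      borel_measurable_integrable[OF G[unfolded set_integrable_def]]
    by measurable
  finally have "set_borel_measurable lborel {a..b} (\<lambda>u. \<phi> u * G u)"
    unfolding set_borel_measurable_def .
  moreover have "set_integrable lborel {a..b} (\<lambda>u. B * G u)"
    using G by simp
  moreover have "norm (\<phi> u * G u) \<le> norm (B * G u)" if "u \<in> {a..b}" for u
    using B[OF that] by (simp add: abs_mult mult_right_mono)
  ultimately show ?thesis
    by (auto intro: set_integrable_bound[of _ _ "\<lambda>u. B * G u"] AE_I2)
qed

lemma sums_set_integral_geometric_dominated:
  fixes f :: "nat \<Rightarrow> real \<Rightarrow> real"
  assumes f: "\<And>k. set_integrable lborel A (f k)" and G: "set_integrable lborel A G"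
    and bound: "\<And>k u. u \<in> A \<Longrightarrow> \<bar>f k u\<bar> \<le> q ^ k * \<bar>G u\<bar>" and q: "0 \<le> q" "q < 1"
    and sums: "\<And>u. u \<in> A \<Longrightarrow> (\<lambda>k. f k u) sums F u"
  shows "(\<lambda>k. LINT u:A|lborel. f k u) sums (LINT u:A|lborel. F u)"
proof -
  define f' where "f' k u = indicator A u *\<^sub>R f k u" for k u
  have f'_integrable: "integrable lborel (f' k)" for k
    using f unfolding set_integrable_def f'_def .
  have f'_bound: "norm (f' k u) \<le> q ^ k * (indicator A u * \<bar>G u\<bar>)" for k u
    using bound[of u k] by (simp add: f'_def indicator_def)
  have geometric: "summable (\<lambda>k. q ^ k)"
    using q by (intro summable_geometric) simp
  have "(\<lambda>k. integral\<^sup>L lborel (f' k)) sums (\<integral>u. (\<Sum>k. f' k u) \<partial>lborel)"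
  proof (rule sums_integral[OF f'_integrable])
    show "AE u in lborel. summable (\<lambda>k. norm (f' k u))"
      using f'_bound by (intro AE_I2 summable_comparison_test'[OF summable_mult2[OF geometric]]) simp
    have "integrable lborel (\<lambda>u. indicator A u * \<bar>G u\<bar>)"
      using set_integrable_abs[OF G] unfolding set_integrable_def by simp
    then have "(\<integral>u. norm (f' k u) \<partial>lborel) \<le> q ^ k * (\<integral>u. indicator A u * \<bar>G u\<bar> \<partial>lborel)" for k
      using f'_integrable f'_bound
      by (subst integral_mult_right_zero[symmetric]) (intro integral_mono, auto)
    then show "summable (\<lambda>k. \<integral>u. norm (f' k u) \<partial>lborel)"
      by (intro summable_comparison_test'[OF summable_mult2[OF geometric]]) simp
  qed
  moreover have "(\<Sum>k. f' k u) = indicator A u *\<^sub>R F u" for u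
    using sums[of u] by (cases "u \<in> A") (simp_all add: f'_def sums_iff)
  ultimately show ?thesis
    by (simp add: f'_def[abs_def] set_lebesgue_integral_def)
qed

lemma moment_series_binomial:
  fixes G :: "real \<Rightarrow> real"
  assumes a: "-1 \<le> a" "a \<le> 0" and T: "0 \<le> T" "\<bar>w\<bar> * T < 1"
    and G: "set_integrable lborel {0..T} G"
  shows "(\<lambda>k. (a gchoose k) * (LINT u:{0..T}|lborel. u ^ k * G u) * w ^ k)
           sums (LINT u:{0..T}|lborel. (1 + w * u) powr a * G u)"
proof -
  have "(\<lambda>k. LINT u:{0..T}|lborel. (a gchoose k) * w ^ k * (u ^ k * G u))
      sums (LINT u:{0..T}|lborel. (1 + w * u) powr a * G u)"
  proof (rule sums_set_integral_geometric_dominated[OF _ G _ _ T(2)])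
    show "set_integrable lborel {0..T} (\<lambda>u. (a gchoose k) * w ^ k * (u ^ k * G u))" for k
      using set_integrable_continuous_mult[OF G, of "\<lambda>u. u ^ k"]
      by (intro set_integrable_mult_right) (simp add: continuous_intros)
    show "\<bar>(a gchoose k) * w ^ k * (u ^ k * G u)\<bar> \<le> (\<bar>w\<bar> * T) ^ k * \<bar>G u\<bar>"
      if "u \<in> {0..T}" for k u
    proof -
      have "\<bar>a gchoose k\<bar> * (\<bar>w\<bar> * u) ^ k \<le> 1 * (\<bar>w\<bar> * T) ^ k"
        using that by (intro mult_mono power_mono mult_left_mono abs_gbinomial_le_1 a) auto
      then have "\<bar>a gchoose k\<bar> * (\<bar>w\<bar> * u) ^ k * \<bar>G u\<bar> \<le> (\<bar>w\<bar> * T) ^ k * \<bar>G u\<bar>"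
        by (simp add: mult_right_mono)
      with that show ?thesis
        by (simp add: abs_mult power_abs power_mult_distrib abs_of_nonneg mult_ac)
    qed
    show "(\<lambda>k. (a gchoose k) * w ^ k * (u ^ k * G u)) sums ((1 + w * u) powr a * G u)"
      if "u \<in> {0..T}" for u
    proof -
      have "\<bar>w * u\<bar> < 1"
        using that T mult_left_mono[of u T "\<bar>w\<bar>"] by (simp add: abs_mult)
      from sums_mult2[OF gen_binomial_real[OF this, of a], of "G u"] show ?thesis
        by (simp add: power_mult_distrib mult_ac)
    qed
  qed (use T in simp)
  then show ?thesis
    by (simp only: set_integral_mult_right) (simp only: mult_ac)
qed

lemma powr_one_minus_mult:
  fixes x u a :: real
  assumes "0 < x" "x * u \<le> 1"
  shows "(1 - x * u) powr a = x powr a * (1 / x - u) powr a"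
proof -
  have "1 - x * u = x * (1 / x - u)" "0 \<le> 1 / x - u"
    using assms by (simp_all add: field_simps)
  then show ?thesis
    using assms by (simp add: powr_mult)
qed

lemma moments_eq_0_if_kernel_tail_vanishes:
  fixes G :: "real \<Rightarrow> real"
  assumes a: "-1 < a" "a < 0" and T: "0 < T" and G: "set_integrable lborel {0..T} G"
    and tail: "\<And>v. T < v \<Longrightarrow> (LINT u:{0..T}|lborel. (v - u) powr a * G u) = 0"
  shows "(LINT u:{0..T}|lborel. u ^ k * G u) = 0"
proof -
  define c where "c k = (a gchoose k) * (LINT u:{0..T}|lborel. u ^ k * G u) * (-1) ^ k" for k
  have series: "(\<lambda>k. c k * x ^ k) sums (LINT u:{0..T}|lborel. (1 - x * u) powr a * G u)"
    if "\<bar>x\<bar> < 1 / T" for x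
    using moment_series_binomial[of a T "-x", OF _ _ _ _ G] a T that
    by (simp add: c_def power_minus' mult.assoc field_simps)
  have "c k = 0"
  proof (rule powser_eq_0_if_vanishes_at_right)
    show "0 < 1 / T"
      using T by simp
    show "summable (\<lambda>k. c k * x ^ k)" if "\<bar>x\<bar> < 1 / T" for x
      using series[OF that] by (rule sums_summable)
    show "(\<lambda>k. c k * x ^ k) sums 0" if x: "0 < x" "x < 1 / T" for x
    proof -
      have "(1 - x * u) powr a * G u = x powr a * ((1 / x - u) powr a * G u)" if "u \<in> {0..T}" for u
      proof -
        have "x * u \<le> x * T"
          using that x by (intro mult_left_mono) auto
        also have "x * T < 1"
          using x T by (simp add: field_simps)
        finally have "x * u \<le> 1"
          by simp
        from powr_one_minus_mult[OF x(1) this] show ?thesis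
          by simp
      qed
      then have "(LINT u:{0..T}|lborel. (1 - x * u) powr a * G u)
          = (LINT u:{0..T}|lborel. x powr a * ((1 / x - u) powr a * G u))"
        by (intro set_lebesgue_integral_cong) auto
      also have "\<dots> = x powr a * (LINT u:{0..T}|lborel. (1 / x - u) powr a * G u)"
        by (rule set_integral_mult_right)
      also have "\<dots> = 0"
        using tail[of "1 / x"] x T by (simp add: field_simps)
      finally show ?thesis
        using series[of x] x by simp
    qed
  qed
  moreover have "a \<notin> \<nat>"
    using a by (auto elim: Nats_cases)
  ultimately show ?thesis
    by (simp add: c_def gbinomial_ne_0)
qed

lemma set_integral_polynomial_mult_eq_0_if_moments_eq_0:
  fixes G :: "real \<Rightarrow> real"
  assumes G: "set_integrable lborel {a..b} G"
    and moments: "\<And>k. (LINT u:{a..b}|lborel. u ^ k * G u) = 0"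
  shows "(LINT u:{a..b}|lborel. (\<Sum>i\<le>n. c i * u ^ i) * G u) = 0"
proof -
  have "set_integrable lborel {a..b} (\<lambda>u. c i * (u ^ i * G u))" for i
    by (rule set_integrable_mult_right, rule set_integrable_continuous_mult[OF G])
       (intro continuous_intros)
  then have monomial_integrable: "integrable lborel (\<lambda>u. indicator {a..b} u *\<^sub>R (c i * (u ^ i * G u)))" for i
    unfolding set_integrable_def .
  have "(LINT u:{a..b}|lborel. (\<Sum>i\<le>n. c i * u ^ i) * G u)
      = (\<integral>u. (\<Sum>i\<le>n. indicator {a..b} u *\<^sub>R (c i * (u ^ i * G u))) \<partial>lborel)"
    unfolding set_lebesgue_integral_def
    by (simp add: scaleR_sum_right sum_distrib_left sum_distrib_right mult_ac)
  also have "\<dots> = (\<Sum>i\<le>n. (LINT u:{a..b}|lborel. c i * (u ^ i * G u)))"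
    unfolding set_lebesgue_integral_def
    by (rule Bochner_Integration.integral_sum) (rule monomial_integrable)
  also have "\<dots> = (\<Sum>i\<le>n. c i * (LINT u:{a..b}|lborel. u ^ i * G u))"
    by (simp only: set_integral_mult_right)
  finally show ?thesis
    by (simp add: moments)
qed

lemma set_integral_continuous_mult_eq_0_if_moments_eq_0:
  fixes G \<phi> :: "real \<Rightarrow> real"
  assumes G: "set_integrable lborel {a..b} G"
    and moments: "\<And>k. (LINT u:{a..b}|lborel. u ^ k * G u) = 0"
    and \<phi>: "continuous_on {a..b} \<phi>"
  shows "(LINT u:{a..b}|lborel. \<phi> u * G u) = 0"
proof -
  define M where "M = (LINT u:{a..b}|lborel. \<bar>G u\<bar>)"
  have bound: "\<bar>LINT u:{a..b}|lborel. \<phi> u * G u\<bar> \<le> e * M" if "0 < e" for e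
  proof -
    obtain p where "polynomial_function p" and p_approx: "\<And>u. u \<in> {a..b} \<Longrightarrow> \<bar>\<phi> u - p u\<bar> < e"
      using Stone_Weierstrass_polynomial_function[OF _ \<phi> \<open>0 < e\<close>] by auto
    then obtain c n where p: "p = (\<lambda>u. \<Sum>i\<le>n. c i * u ^ i)"
      using real_polynomial_function_eq real_polynomial_function_iff_sum by metis
    have p_cont: "continuous_on {a..b} p"
      unfolding p by (intro continuous_intros)
    have diff_integrable: "set_integrable lborel {a..b} (\<lambda>u. (\<phi> u - p u) * G u)"
      using \<phi> p_cont by (intro set_integrable_continuous_mult[OF G] continuous_on_diff)
    have "\<bar>LINT u:{a..b}|lborel. \<phi> u * G u\<bar> = \<bar>LINT u:{a..b}|lborel. (\<phi> u - p u) * G u\<bar>"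
      using set_integral_diff(2)[OF set_integrable_continuous_mult[OF G \<phi>]
          set_integrable_continuous_mult[OF G p_cont]]
        set_integral_polynomial_mult_eq_0_if_moments_eq_0[OF G moments]
      by (simp add: p left_diff_distrib)
    also have "\<dots> \<le> (LINT u:{a..b}|lborel. \<bar>(\<phi> u - p u) * G u\<bar>)"
      using set_integral_norm_bound[OF diff_integrable] by simp
    also have "\<dots> \<le> (LINT u:{a..b}|lborel. e * \<bar>G u\<bar>)"
      using set_integrable_abs[OF diff_integrable] set_integrable_abs[OF G] p_approx
      by (intro set_integral_mono) (auto simp: abs_mult less_imp_le intro!: mult_right_mono)
    also have "\<dots> = e * M"
      by (simp add: M_def)
    finally show ?thesis .
  qed
  have "((\<lambda>e. e * M) \<longlongrightarrow> 0) (at_right 0)"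
    by (auto intro!: tendsto_eq_intros)
  moreover have "eventually (\<lambda>e. \<bar>LINT u:{a..b}|lborel. \<phi> u * G u\<bar> \<le> e * M) (at_right 0)"
    using bound by (auto simp: eventually_at_right_field intro!: exI[of _ 1])
  ultimately have "\<bar>LINT u:{a..b}|lborel. \<phi> u * G u\<bar> \<le> 0"
    by (rule tendsto_lowerbound) simp
  then show ?thesis
    by simp
qed

text \<open>Gamma (b + 1) times the Riemann-Liouville integral of order b + 1; in particular
  caputo \<alpha> dx t = abel_integral (- \<alpha>) dx t / Gamma (1 - \<alpha>).\<close>

definition abel_integral :: "real \<Rightarrow> (real \<Rightarrow> real) \<Rightarrow> real \<Rightarrow> real" where
  "abel_integral b g t = (LINT u:{0..t}|lborel. (t - u) powr b * g u)"

text \<open>A continuous function that agrees with the kernel (t - u) powr b for u \<le> t - 2 / (n + 1)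
  and vanishes for u \<ge> t - 1 / (n + 1).\<close>

definition kernel_cutoff :: "real \<Rightarrow> real \<Rightarrow> nat \<Rightarrow> real \<Rightarrow> real" where
  "kernel_cutoff b t n u = max (t - u) (1 / Suc n) powr b * min 1 (max 0 (real (Suc n) * (t - u) - 1))"

lemma continuous_on_kernel_cutoff: "continuous_on A (kernel_cutoff b t n)"
  unfolding kernel_cutoff_def by (intro continuous_intros) (auto simp: max_def)

lemma kernel_cutoff_eq_kernel: "2 / Suc n \<le> t - u \<Longrightarrow> kernel_cutoff b t n u = (t - u) powr b"
  by (auto simp: kernel_cutoff_def max_def field_simps)

lemma abs_kernel_cutoff_le: "\<bar>kernel_cutoff b t n u\<bar> \<le> (if u < t then (t - u) powr b else 0)"
proof (cases "t - u \<le> 1 / Suc n")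
  case False
  have "0 < 1 / real (Suc n)"
    by simp
  with False have "u < t"
    by linarith
  moreover have "kernel_cutoff b t n u = (t - u) powr b * min 1 (max 0 (real (Suc n) * (t - u) - 1))"
    using False by (simp add: kernel_cutoff_def max_def)
  ultimately show ?thesis
    by (simp add: abs_mult mult_left_le)
qed (simp add: kernel_cutoff_def field_simps)

lemma kernel_cutoff_tendsto:
  assumes "u < t"
  shows "(\<lambda>n. kernel_cutoff b t n u) \<longlonglongrightarrow> (t - u) powr b"
proof -
  obtain N :: nat where N: "2 / (t - u) < N"
    using reals_Archimedean2 by blast
  have "kernel_cutoff b t n u = (t - u) powr b" if "N \<le> n" for n
  proof (rule kernel_cutoff_eq_kernel)
    have "real N \<le> real n"
      using that by simp
    with N have "2 / (t - u) < Suc n"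
      by simp
    then show "2 / Suc n \<le> t - u"
      using assms by (simp add: field_simps)
  qed
  then show ?thesis
    by (intro tendsto_eventually) (auto simp: eventually_sequentially)
qed

lemma abs_kernel_cutoff_mult_le:
  assumes "t \<le> T"
  shows "\<bar>kernel_cutoff b t n u * (indicator {0..T} u * g u)\<bar> \<le> \<bar>indicator {0..t} u * ((t - u) powr b * g u)\<bar>"
proof -
  have "\<bar>kernel_cutoff b t n u\<bar> * \<bar>g u\<bar> \<le> (if u < t then (t - u) powr b else 0) * \<bar>g u\<bar>"
    using abs_kernel_cutoff_le by (rule mult_right_mono) simp
  then show ?thesis
    using assms by (auto simp: abs_mult indicator_def split: if_splits)
qed

lemma kernel_cutoff_mult_tendsto:
  assumes "t \<le> T"
  shows "(\<lambda>n. kernel_cutoff b t n u * (indicator {0..T} u * g u))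
           \<longlonglongrightarrow> indicator {0..t} u * ((t - u) powr b * g u)"
proof (cases "0 \<le> u \<and> u < t")
  case True
  then show ?thesis
    using assms tendsto_mult_right[OF kernel_cutoff_tendsto, of u t b "g u"] by simp
next
  case False
  then have "kernel_cutoff b t n u * (indicator {0..T} u * g u) = 0"
    and "indicator {0..t} u * ((t - u) powr b * g u) = 0" for n
    using abs_kernel_cutoff_le[of b t n u] by (auto simp: indicator_def)
  then show ?thesis
    by (simp only: tendsto_const)
qed

lemma abel_integral_eq_0_if_orthogonal_continuous:
  fixes G :: "real \<Rightarrow> real"
  assumes "t \<le> T"
    and orth: "\<And>\<phi>. continuous_on {0..T} \<phi> \<Longrightarrow> (LINT u:{0..T}|lborel. \<phi> u * G u) = 0"
    and G: "set_integrable lborel {0..T} G"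
    and kernel: "set_integrable lborel {0..t} (\<lambda>u. (t - u) powr b * G u)"
  shows "abel_integral b G t = 0"
proof -
  define f where "f u = indicator {0..t} u * ((t - u) powr b * G u)" for u
  define s where "s n u = kernel_cutoff b t n u * (indicator {0..T} u * G u)" for n u
  have f_integrable: "integrable lborel f"
    using kernel unfolding set_integrable_def f_def by simp
  have "(\<lambda>n. integral\<^sup>L lborel (s n)) \<longlonglongrightarrow> integral\<^sup>L lborel f"
  proof (rule integral_dominated_convergence[where w = "\<lambda>u. \<bar>f u\<bar>"])
    show "f \<in> borel_measurable lborel"
      using f_integrable by (rule borel_measurable_integrable)
    show "integrable lborel (\<lambda>u. \<bar>f u\<bar>)"
      using f_integrable by (rule integrable_abs)
    have "(\<lambda>u. indicator {0..T} u * G u) \<in> borel_measurable lborel"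
      using G unfolding set_integrable_def by (auto dest: borel_measurable_integrable)
    moreover have "kernel_cutoff b t n \<in> borel_measurable lborel" for n
      by (simp add: borel_measurable_continuous_onI continuous_on_kernel_cutoff)
    ultimately show "s n \<in> borel_measurable lborel" for n
      unfolding s_def by measurable
    show "AE u in lborel. norm (s n u) \<le> \<bar>f u\<bar>" for n
      using abs_kernel_cutoff_mult_le[OF \<open>t \<le> T\<close>] by (simp add: s_def f_def)
    show "AE u in lborel. (\<lambda>n. s n u) \<longlonglongrightarrow> f u"
      using kernel_cutoff_mult_tendsto[OF \<open>t \<le> T\<close>] by (simp add: s_def f_def)
  qed
  moreover have "integral\<^sup>L lborel (s n) = 0" for n
    using orth[OF continuous_on_kernel_cutoff] unfolding s_def set_lebesgue_integral_def
    by (simp add: mult_ac)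
  ultimately have "integral\<^sup>L lborel f = 0"
    by (simp add: LIMSEQ_const_iff)
  then show ?thesis
    unfolding abel_integral_def set_lebesgue_integral_def f_def by simp
qed

lemma set_integrable_of_kernel:
  fixes G :: "real \<Rightarrow> real"
  assumes "T < v" and kernel: "set_integrable lborel {0..v} (\<lambda>u. (v - u) powr b * G u)"
  shows "set_integrable lborel {0..T} G"
proof -
  have "set_integrable lborel {0..T} (\<lambda>u. (v - u) powr b * G u)"
    using \<open>T < v\<close> by (auto intro: set_integrable_subset[OF kernel])
  then have "set_integrable lborel {0..T} (\<lambda>u. (v - u) powr (- b) * ((v - u) powr b * G u))"
    by (rule set_integrable_continuous_mult) (use \<open>T < v\<close> in \<open>auto intro!: continuous_intros\<close>)
  moreover have "set_integrable lborel {0..T} (\<lambda>u. (v - u) powr (- b) * ((v - u) powr b * G u))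
      = set_integrable lborel {0..T} G"
    using \<open>T < v\<close> by (intro set_integrable_cong) (auto simp: powr_minus field_simps)
  ultimately show ?thesis
    by simp
qed

lemma abel_integral_eq_0_if_kernel_tail_vanishes:
  fixes G :: "real \<Rightarrow> real"
  assumes b: "-1 < b" "b < 0" and T: "0 < T"
    and kernel: "\<And>t. 0 \<le> t \<Longrightarrow> set_integrable lborel {0..t} (\<lambda>u. (t - u) powr b * G u)"
    and tail: "\<And>v. T < v \<Longrightarrow> (LINT u:{0..T}|lborel. (v - u) powr b * G u) = 0"
    and t: "0 \<le> t" "t \<le> T"
  shows "abel_integral b G t = 0"
proof -
  have G: "set_integrable lborel {0..T} G"
    using T kernel[of "T + 1"] by (intro set_integrable_of_kernel[of T "T + 1"]) simp_all
  show ?thesis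
  proof (rule abel_integral_eq_0_if_orthogonal_continuous[OF t(2) _ G kernel[OF t(1)]])
    fix \<phi> :: "real \<Rightarrow> real"
    assume "continuous_on {0..T} \<phi>"
    with G moments_eq_0_if_kernel_tail_vanishes[OF b T G tail]
    show "(LINT u:{0..T}|lborel. \<phi> u * G u) = 0"
      by (rule set_integral_continuous_mult_eq_0_if_moments_eq_0)
  qed
qed

lemma Beta_real_pos: "0 < a \<Longrightarrow> 0 < b \<Longrightarrow> 0 < Beta a (b :: real)"
  by (simp add: Beta_def Gamma_real_pos)

lemma nn_integral_Beta:
  fixes a b :: real
  assumes "0 < a" "0 < b"
  shows "(\<integral>\<^sup>+w. ennreal (indicator {0..1} w * (w powr (a - 1) * (1 - w) powr (b - 1))) \<partial>lborel)
       = ennreal (Beta a b)"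
  using has_integral_Beta_real[OF assms] by (subst nn_integral_has_integral_lebesgue) auto

lemma beta_kernel_affine:
  fixes a b c s w :: real
  assumes "0 < c"
  shows "indicator {s..s + c} (s + c * w) * ((s + c - (s + c * w)) powr (a - 1) * (s + c * w - s) powr (b - 1))
       = c powr (a + b - 2) * (indicator {0..1} w * (w powr (b - 1) * (1 - w) powr (a - 1)))"
proof (cases "w \<in> {0..1}")
  case True
  have "0 \<le> c * w" "c * w \<le> c"
    using True assms by (simp_all add: mult_left_le)
  moreover have "s + c - (s + c * w) = c * (1 - w)"
    by (simp add: algebra_simps)
  moreover have "c powr (a - 1) * c powr (b - 1) = c powr (a + b - 2)"
    by (simp add: powr_add[symmetric])
  ultimately show ?thesis
    using True assms by (simp add: powr_mult mult_ac)
next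
  case False
  then have "w < 0 \<or> 1 < w"
    by auto
  then have "c * w < 0 \<or> c * 1 < c * w"
    using assms by (auto simp: mult_pos_neg)
  with False show ?thesis
    by auto
qed

lemma nn_integral_beta_kernel:
  fixes a b s t :: real
  assumes a: "0 < a" and b: "0 < b" and "s < t"
  shows "(\<integral>\<^sup>+u. ennreal (indicator {s..t} u * ((t - u) powr (a - 1) * (u - s) powr (b - 1))) \<partial>lborel)
       = ennreal ((t - s) powr (a + b - 1) * Beta a b)"
proof -
  define c where "c = t - s"
  have c: "0 < c" "t = s + c"
    using \<open>s < t\<close> by (simp_all add: c_def)
  define F where "F u = ennreal (indicator {s..t} u * ((t - u) powr (a - 1) * (u - s) powr (b - 1)))" for u
  have "F \<in> borel_measurable borel"
    unfolding F_def by measurable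
  then have "integral\<^sup>N lborel F = ennreal c * (\<integral>\<^sup>+w. F (s + c * w) \<partial>lborel)"
    using nn_integral_real_affine[of F c s] c by simp
  also have "\<dots> = ennreal c * (\<integral>\<^sup>+w. ennreal (c powr (a + b - 2))
      * ennreal (indicator {0..1} w * (w powr (b - 1) * (1 - w) powr (a - 1))) \<partial>lborel)"
    unfolding F_def c(2) beta_kernel_affine[OF c(1)] by (simp add: ennreal_mult)
  also have "\<dots> = ennreal c * ennreal (c powr (a + b - 2)) * ennreal (Beta a b)"
    using nn_integral_Beta[OF b a] by (simp add: nn_integral_cmult Beta_commute mult.assoc)
  also have "\<dots> = ennreal ((t - s) powr (a + b - 1) * Beta a b)"
    using c(1) powr_add[of c 1 "a + b - 2"] Beta_real_pos[OF a b]
    by (simp add: ennreal_mult[symmetric] c_def)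
  finally show ?thesis
    unfolding F_def .
qed

text \<open>The integrand of abel_integral (\<alpha> - 1) (abel_integral (- \<alpha>) g) t in the two integration
  variables u and s, without the factor g s.\<close>

definition abel_kernel :: "real \<Rightarrow> real \<Rightarrow> real \<Rightarrow> real \<Rightarrow> real" where
  "abel_kernel \<alpha> t u s = (if s \<le> u \<and> u \<le> t then (t - u) powr (\<alpha> - 1) * (u - s) powr (- \<alpha>) else 0)"

lemma abel_kernel_nonneg: "0 \<le> abel_kernel \<alpha> t u s"
  by (simp add: abel_kernel_def)

lemma borel_measurable_abel_kernel [measurable]:
  "(\<lambda>(u, s). abel_kernel \<alpha> t u s) \<in> borel_measurable (lborel \<Otimes>\<^sub>M lborel)"
  unfolding abel_kernel_def by measurable

lemma nn_integral_abel_kernel: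
  assumes "0 < \<alpha>" "\<alpha> < 1"
  shows "(\<integral>\<^sup>+u. ennreal (abel_kernel \<alpha> t u s) \<partial>lborel) = ennreal (if s < t then Beta \<alpha> (1 - \<alpha>) else 0)"
proof (cases "s < t")
  case True
  have "(\<integral>\<^sup>+u. ennreal (abel_kernel \<alpha> t u s) \<partial>lborel)
     = (\<integral>\<^sup>+u. ennreal (indicator {s..t} u * ((t - u) powr (\<alpha> - 1) * (u - s) powr (1 - \<alpha> - 1))) \<partial>lborel)"
    by (intro nn_integral_cong) (simp add: abel_kernel_def indicator_def)
  also have "\<dots> = ennreal (Beta \<alpha> (1 - \<alpha>))"
    using nn_integral_beta_kernel[of \<alpha> "1 - \<alpha>" s t] assms True by simp
  finally show ?thesis
    using True by simp
next
  case False
  then have "abel_kernel \<alpha> t u s = 0" for u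
    by (auto simp: abel_kernel_def)
  with False show ?thesis
    by simp
qed

lemma integral_abel_kernel:
  assumes "0 < \<alpha>" "\<alpha> < 1"
  shows "(\<integral>u. abel_kernel \<alpha> t u s \<partial>lborel) = (if s < t then Beta \<alpha> (1 - \<alpha>) else 0)"
proof -
  have "0 < Beta \<alpha> (1 - \<alpha>)"
    using assms by (simp add: Beta_real_pos)
  with nn_integral_abel_kernel[OF assms, of t s] show ?thesis
    by (subst (asm) nn_integral_eq_integrable) (auto simp: abel_kernel_nonneg)
qed

lemma integrable_abel_kernel_mult:
  assumes \<alpha>: "0 < \<alpha>" "\<alpha> < 1" and g: "integrable lborel g"
  shows "integrable (lborel \<Otimes>\<^sub>M lborel) (\<lambda>(u, s). abel_kernel \<alpha> t u s * g s)"
proof (subst integrable_iff_bounded, intro conjI)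
  have [measurable]: "g \<in> borel_measurable borel"
    using borel_measurable_integrable[OF g] by simp
  show "(\<lambda>(u, s). abel_kernel \<alpha> t u s * g s) \<in> borel_measurable (lborel \<Otimes>\<^sub>M lborel)"
    by measurable
  have "(\<integral>\<^sup>+p. ennreal (norm (case p of (u, s) \<Rightarrow> abel_kernel \<alpha> t u s * g s)) \<partial>(lborel \<Otimes>\<^sub>M lborel))
      = (\<integral>\<^sup>+s. (\<integral>\<^sup>+u. ennreal \<bar>g s\<bar> * ennreal (abel_kernel \<alpha> t u s) \<partial>lborel) \<partial>lborel)"
    by (subst lborel_pair.nn_integral_snd[symmetric])
       (auto simp: case_prod_beta abs_mult abel_kernel_nonneg ennreal_mult' mult.commute
         intro!: nn_integral_cong)
  also have "\<dots> = (\<integral>\<^sup>+s. ennreal \<bar>g s\<bar> * ennreal (if s < t then Beta \<alpha> (1 - \<alpha>) else 0) \<partial>lborel)"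
    by (simp add: nn_integral_cmult nn_integral_abel_kernel[OF \<alpha>])
  also have "\<dots> \<le> (\<integral>\<^sup>+s. ennreal (Beta \<alpha> (1 - \<alpha>)) * ennreal (norm (g s)) \<partial>lborel)"
    by (intro nn_integral_mono) (auto simp: mult.commute)
  also have "\<dots> = ennreal (Beta \<alpha> (1 - \<alpha>)) * (\<integral>\<^sup>+s. ennreal (norm (g s)) \<partial>lborel)"
    by (simp add: nn_integral_cmult)
  also have "\<dots> < \<infinity>"
    using g unfolding integrable_iff_bounded by (simp add: ennreal_mult_less_top)
  finally show "(\<integral>\<^sup>+p. ennreal (norm (case p of (u, s) \<Rightarrow> abel_kernel \<alpha> t u s * g s))
      \<partial>(lborel \<Otimes>\<^sub>M lborel)) < \<infinity>" .
qed

lemma abel_integral_semigroup: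
  fixes g :: "real \<Rightarrow> real"
  assumes \<alpha>: "0 < \<alpha>" "\<alpha> < 1" and g: "set_integrable lborel {0..t} g"
  shows "set_integrable lborel {0..t} (\<lambda>u. (t - u) powr (\<alpha> - 1) * abel_integral (- \<alpha>) g u)"
    and "abel_integral (\<alpha> - 1) (abel_integral (- \<alpha>) g) t = Beta \<alpha> (1 - \<alpha>) * (LINT s:{0..t}|lborel. g s)"
proof -
  define g' where "g' s = indicator {0..t} s * g s" for s
  have g'_integrable: "integrable lborel g'"
    using g unfolding set_integrable_def g'_def by simp
  then have [measurable]: "g' \<in> borel_measurable borel"
    using borel_measurable_integrable by simp
  define K where "K u s = abel_kernel \<alpha> t u s * g' s" for u s
  have K_integrable: "integrable (lborel \<Otimes>\<^sub>M lborel) (\<lambda>(u, s). K u s)"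
    unfolding K_def using \<alpha> g'_integrable by (rule integrable_abel_kernel_mult)
  have K_inner_s: "(\<integral>s. K u s \<partial>lborel) = indicator {0..t} u * ((t - u) powr (\<alpha> - 1) * abel_integral (- \<alpha>) g u)"
    for u
  proof (cases "u \<in> {0..t}")
    case True
    then have "(\<integral>s. K u s \<partial>lborel)
        = (\<integral>s. (t - u) powr (\<alpha> - 1) * (indicator {0..u} s *\<^sub>R ((u - s) powr (- \<alpha>) * g s)) \<partial>lborel)"
      by (intro Bochner_Integration.integral_cong) (auto simp: K_def abel_kernel_def g'_def indicator_def)
    with True show ?thesis
      by (simp add: abel_integral_def set_lebesgue_integral_def)
  next
    case False
    then have "K u s = 0" for s
      by (auto simp: K_def abel_kernel_def g'_def)
    with False show ?thesis
      by simp
  qed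
  show "set_integrable lborel {0..t} (\<lambda>u. (t - u) powr (\<alpha> - 1) * abel_integral (- \<alpha>) g u)"
    using lborel_pair.integrable_fst[OF K_integrable] unfolding set_integrable_def K_inner_s by simp
  have "abel_integral (\<alpha> - 1) (abel_integral (- \<alpha>) g) t = (\<integral>u. \<integral>s. K u s \<partial>lborel \<partial>lborel)"
    unfolding abel_integral_def[of "\<alpha> - 1"] set_lebesgue_integral_def K_inner_s by simp
  also have "\<dots> = (\<integral>s. \<integral>u. K u s \<partial>lborel \<partial>lborel)"
    by (rule lborel_pair.Fubini_integral[OF K_integrable, symmetric])
  also have "\<dots> = (\<integral>s. Beta \<alpha> (1 - \<alpha>) * g' s \<partial>lborel)"
    unfolding K_def integral_mult_left_zero integral_abel_kernel[OF \<alpha>]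
  proof (rule integral_cong_AE)
    show "AE s in lborel. (if s < t then Beta \<alpha> (1 - \<alpha>) else 0) * g' s = Beta \<alpha> (1 - \<alpha>) * g' s"
      by (rule eventually_mono[OF AE_lborel_singleton[of t]]) (auto simp: g'_def)
  qed measurable
  also have "\<dots> = Beta \<alpha> (1 - \<alpha>) * (LINT s:{0..t}|lborel. g s)"
    by (simp add: g'_def set_lebesgue_integral_def)
  finally show "abel_integral (\<alpha> - 1) (abel_integral (- \<alpha>) g) t = Beta \<alpha> (1 - \<alpha>) * (LINT s:{0..t}|lborel. g s)" .
qed

lemma kernel_tail_eq_0_if_periodic:
  fixes G :: "real \<Rightarrow> real"
  assumes "0 \<le> T" "T < v"
    and G_periodic: "\<And>u. 0 \<le> u \<Longrightarrow> G (u + T) = G u"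
    and abel_periodic: "\<And>t. 0 \<le> t \<Longrightarrow> abel_integral b G (t + T) = abel_integral b G t"
    and kernel: "set_integrable lborel {0..v} (\<lambda>u. (v - u) powr b * G u)"
  shows "(LINT u:{0..T}|lborel. (v - u) powr b * G u) = 0"
proof -
  define t where "t = v - T"
  define H where "H = (\<lambda>u. (v - u) powr b * G u)"
  have t: "0 \<le> t" "v = t + T"
    using assms by (simp_all add: t_def)
  have H_integrable: "set_integrable lborel {0..T} H" "set_integrable lborel {T..v} H"
    using assms unfolding H_def by (auto intro: set_integrable_subset[OF kernel])
  have split_interval: "{0..v} = {0..T} \<union> {T..v}"
    using assms by auto
  have split: "abel_integral b G v = (LINT u:{0..T}|lborel. H u) + (LINT u:{T..v}|lborel. H u)"
    unfolding abel_integral_def H_def[symmetric] split_interval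
    by (rule set_integral_Un_AE[OF _ _ _ H_integrable])
       (auto intro!: eventually_mono[OF AE_lborel_singleton[of T]])
  have shift: "(LINT u:{T..v}|lborel. H u) = abel_integral b G t"
  proof -
    have "(LINT u:{T..v}|lborel. H u) = (\<integral>w. indicator {T..v} (T + 1 * w) *\<^sub>R H (T + 1 * w) \<partial>lborel)"
      unfolding set_lebesgue_integral_def by (subst lborel_integral_real_affine[of 1 _ T]) simp_all
    also have "\<dots> = (\<integral>w. indicator {0..t} w *\<^sub>R ((t - w) powr b * G w) \<partial>lborel)"
      using G_periodic by (intro Bochner_Integration.integral_cong)
        (auto simp: H_def t indicator_def add.commute)
    finally show ?thesis
      unfolding abel_integral_def set_lebesgue_integral_def .
  qed
  show ?thesis
    using split shift abel_periodic[OF t(1)] t(2) by (simp add: H_def)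
qed

lemma periodic_eq_if_eq_on_period:
  fixes x :: "real \<Rightarrow> 'a"
  assumes "0 < T" and periodic: "\<And>t. 0 \<le> t \<Longrightarrow> x (t + T) = x t"
    and on_period: "\<And>t. 0 \<le> t \<Longrightarrow> t \<le> T \<Longrightarrow> x t = x 0" and "0 \<le> t"
  shows "x t = x 0"
proof -
  have "x t = x 0" if "0 \<le> t" "t < real n * T" for n t
    using that
  proof (induction n arbitrary: t)
    case (Suc n)
    show ?case
    proof (cases "t \<le> T")
      case False
      then have "x t = x (t - T)"
        using periodic[of "t - T"] by simp
      also have "\<dots> = x 0"
        by (rule Suc.IH) (use False Suc.prems in \<open>simp_all add: algebra_simps\<close>)
      finally show ?thesis .
    next
      case True
      with Suc.prems show ?thesis
        by (intro on_period) auto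
    qed
  qed simp
  moreover obtain n where "t < real n * T"
    using ex_less_of_nat_mult[OF \<open>0 < T\<close>] by blast
  ultimately show ?thesis
    using \<open>0 \<le> t\<close> by blast
qed

lemma abel_integral_inverts_caputo:
  assumes \<alpha>: "0 < \<alpha>" "\<alpha> < 1" and x: "has_loc_int_derivative x h" and "0 \<le> t"
  shows "set_integrable lborel {0..t} (\<lambda>u. (t - u) powr (\<alpha> - 1) * abel_integral (- \<alpha>) h u)"
    and "abel_integral (\<alpha> - 1) (abel_integral (- \<alpha>) h) t = Beta \<alpha> (1 - \<alpha>) * (x t - x 0)"
proof -
  have h: "set_integrable lborel {0..t} h" and x_t: "x t = x 0 + (LINT s:{0..t}|lborel. h s)"
    using x \<open>0 \<le> t\<close> unfolding has_loc_int_derivative_def by blast+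
  show "set_integrable lborel {0..t} (\<lambda>u. (t - u) powr (\<alpha> - 1) * abel_integral (- \<alpha>) h u)"
    by (rule abel_integral_semigroup(1)[OF \<alpha> h])
  show "abel_integral (\<alpha> - 1) (abel_integral (- \<alpha>) h) t = Beta \<alpha> (1 - \<alpha>) * (x t - x 0)"
    using abel_integral_semigroup(2)[OF \<alpha> h] x_t by simp
qed

theorem theorem5p1:
  fixes \<alpha> x0 :: real and f :: "real \<Rightarrow> real"
  assumes "0 < \<alpha>" and "\<alpha> < 1"
  shows "\<not> (\<exists>x. is_solution \<alpha> f x0 x \<and> periodic_on_nonneg x \<and> nonconstant_on_nonneg x)"
proof
  assume "\<exists>x. is_solution \<alpha> f x0 x \<and> periodic_on_nonneg x \<and> nonconstant_on_nonneg x"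
  then obtain x h T where h: "has_loc_int_derivative x h"
    and caputo_eq: "\<And>t. 0 \<le> t \<Longrightarrow> caputo \<alpha> h t = f (x t)"
    and "0 < T" and x_periodic: "\<And>t. 0 \<le> t \<Longrightarrow> x (t + T) = x t"
    and "nonconstant_on_nonneg x"
    unfolding is_solution_def periodic_on_nonneg_def by blast
  define G where "G = abel_integral (- \<alpha>) h"
  have "0 < Gamma (1 - \<alpha>)"
    using \<open>\<alpha> < 1\<close> by (simp add: Gamma_real_pos)
  then have "G u = Gamma (1 - \<alpha>) * f (x u)" if "0 \<le> u" for u
    using caputo_eq[OF that] by (simp add: G_def caputo_def abel_integral_def field_simps)
  then have G_periodic: "G (u + T) = G u" if "0 \<le> u" for u
    using x_periodic that \<open>0 < T\<close> by simp
  note kernel = abel_integral_inverts_caputo(1)[OF assms h, folded G_def]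
  note x_eq = abel_integral_inverts_caputo(2)[OF assms h, folded G_def]
  have tail: "(LINT u:{0..T}|lborel. (v - u) powr (\<alpha> - 1) * G u) = 0" if "T < v" for v
    using \<open>0 < T\<close> that G_periodic x_periodic
    by (intro kernel_tail_eq_0_if_periodic) (simp_all add: x_eq kernel)
  have "abel_integral (\<alpha> - 1) G t = 0" if "0 \<le> t" "t \<le> T" for t
    using assms \<open>0 < T\<close> kernel tail that by (intro abel_integral_eq_0_if_kernel_tail_vanishes) auto
  then have "x t = x 0" if "0 \<le> t" "t \<le> T" for t
    using x_eq[OF that(1)] that Beta_real_pos[of \<alpha> "1 - \<alpha>"] assms by simp
  then have "x t = x 0" if "0 \<le> t" for t
    using periodic_eq_if_eq_on_period[of T x, OF \<open>0 < T\<close> x_periodic] that by blast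
  with \<open>nonconstant_on_nonneg x\<close> show False
    unfolding nonconstant_on_nonneg_def by metis
qed

end
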